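(* Let $Y\in\{0,1\}$, $Z$ and $S\in\mathbb R$ be random variables on a common probability space such that $Z\perp S\mid Y$, and suppose there exists $a\in\mathbb R$ with $\mathbb P(S\le a\mid Y=1)\neq\mathbb P(S\le a\mid Y=0)$. Then $S$ is a perfect surrogate: for any measurable function $g$ of $Z$, if $Z\perp S\mid g(Z)$, then $Z\perp Y\mid g(Z)$.
   Context: A surrogate variable $S$ for $Y$ is called perfect if for every measurable function $g$ of $Z$, $Z\perp S\mid g(Z)$ implies $Z\perp Y\mid g(Z)$. *)

theory Defs
  imports "HOL-Probability.Probability"
begin

definition cond_indep ::
  "'a measure \<Rightarrow> 'x measure \<Rightarrow> ('a \<Rightarrow> 'x) \<Rightarrow> 'v measure \<Rightarrow> ('a \<Rightarrow> 'v)
     \<Rightarrow> 'w measure \<Rightarrow> ('a \<Rightarrow> 'w) \<Rightarrow> bool" where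
  "cond_indep M MX X MV V MW W \<longleftrightarrow>
     (\<forall>A\<in>sets MX. \<forall>B\<in>sets MV.
        AE \<omega> in M.
          real_cond_exp M (vimage_algebra (space M) W MW)
             (\<lambda>\<omega>. indicator (X -` A \<inter> space M) \<omega> * indicator (V -` B \<inter> space M) \<omega>) \<omega>
          = real_cond_exp M (vimage_algebra (space M) W MW)
               (indicator (X -` A \<inter> space M)) \<omega>
            * real_cond_exp M (vimage_algebra (space M) W MW)
               (indicator (V -` B \<inter> space M)) \<omega>)"

end

theory Submission
  imports Defs
begin

text \<open>Write \<open>q(Z) = P(Y = 1 | Z)\<close> and \<open>p\<^sub>y = P(S \<le> a | Y = y)\<close>. Since \<open>Z \<perp> S | Y\<close>,
  \<open>P(S \<le> a | Z) = p\<^sub>0 + (p\<^sub>1 - p\<^sub>0) q(Z)\<close>; since \<open>Z \<perp> S | g(Z)\<close>,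
  \<open>P(S \<le> a | Z) = P(S \<le> a | g(Z))\<close>. As \<open>p\<^sub>1 \<noteq> p\<^sub>0\<close>, \<open>q(Z)\<close> is therefore a function of
  \<open>g(Z)\<close>, i.e. \<open>q(Z) = P(Y = 1 | g(Z))\<close>. For a binary \<open>Y\<close> this is exactly \<open>Z \<perp> Y | g(Z)\<close>,
  because conditional independence of \<open>Z\<close> and \<open>V\<close> given \<open>g(Z)\<close> amounts to
  \<open>P(V \<in> B | Z) = P(V \<in> B | g(Z))\<close> for all measurable \<open>B\<close>.\<close>

lemma subalgebra_vimage_algebra:
  assumes "W \<in> measurable M N"
  shows "subalgebra M (vimage_algebra (space M) W N)"
  using sets_image_in_sets[OF refl assms] by (simp add: subalgebra_def)

lemma subalgebra_vimage_algebra_comp: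
  assumes "Z \<in> measurable M MZ" "g \<in> measurable MZ MG"
  shows "subalgebra (vimage_algebra (space M) Z MZ) (vimage_algebra (space M) (g \<circ> Z) MG)"
proof -
  have "Z \<in> measurable (vimage_algebra (space M) Z MZ) MZ"
    using measurable_space[OF assms(1)] by (intro measurable_vimage_algebra1) blast
  then show ?thesis
    using subalgebra_vimage_algebra[of "g \<circ> Z" "vimage_algebra (space M) Z MZ" MG] assms(2)
    by (simp add: measurable_comp)
qed

lemma subalgebra_trans:
  assumes "subalgebra M G" "subalgebra G F"
  shows "subalgebra M F"
  using assms by (auto simp: subalgebra_def)

lemma (in prob_space) sigma_finite_subalgebra_if_subalgebra:
  assumes "subalgebra M F"
  shows "sigma_finite_subalgebra M F"
  by (rule finite_measure_subalgebra_is_sigma_finite) (unfold_locales, fact)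

lemma (in prob_space) integrable_indicator_event [simp, intro]:
  "A \<in> events \<Longrightarrow> integrable M (indicator A :: 'a \<Rightarrow> real)"
  by (simp add: integrable_indicator_iff emeasure_eq_measure)

lemma (in prob_space) prob_conj_eq_cond_prob_mult:
  assumes "{\<omega> \<in> space M. P \<omega>} \<in> events" "{\<omega> \<in> space M. Q \<omega>} \<in> events"
  shows "\<P>(\<omega> in M. P \<omega> \<and> Q \<omega>) = \<P>(\<omega> in M. P \<omega> \<bar> Q \<omega>) * \<P>(\<omega> in M. Q \<omega>)"
proof (cases "\<P>(\<omega> in M. Q \<omega>) = 0")
  case True
  have "\<P>(\<omega> in M. P \<omega> \<and> Q \<omega>) \<le> \<P>(\<omega> in M. Q \<omega>)"
    using assms by (intro finite_measure_mono) auto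
  with True show ?thesis by (simp add: measure_le_0_iff)
qed (simp add: cond_prob_def)

lemma set_integral_indicator_Collect:
  "(\<integral>\<omega>\<in>{\<omega> \<in> space M. Q \<omega>}. indicator {\<omega> \<in> space M. P \<omega>} \<omega> \<partial>M) = measure M {\<omega> \<in> space M. P \<omega> \<and> Q \<omega>}"
proof -
  have "(\<lambda>\<omega>. indicator {\<omega> \<in> space M. Q \<omega>} \<omega> * indicator {\<omega> \<in> space M. P \<omega>} \<omega>)
      = (indicator {\<omega> \<in> space M. P \<omega> \<and> Q \<omega>} :: _ \<Rightarrow> real)"
    by (auto simp: indicator_def)
  then show ?thesis
    by (simp add: set_lebesgue_integral_def Int_absorb2)
qed

lemma (in prob_space) real_cond_exp_affine:
  assumes "sigma_finite_subalgebra M F" "integrable M f"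
  shows "AE \<omega> in M. real_cond_exp M F (\<lambda>\<omega>. c + d * f \<omega>) \<omega> = c + d * real_cond_exp M F f \<omega>"
proof -
  interpret F: sigma_finite_subalgebra M F by fact
  have "AE \<omega> in M. real_cond_exp M F (\<lambda>\<omega>. c + d * f \<omega>) \<omega>
      = real_cond_exp M F (\<lambda>_. c) \<omega> + real_cond_exp M F (\<lambda>\<omega>. d * f \<omega>) \<omega>"
    using assms(2) by (intro F.real_cond_exp_add) auto
  moreover have "AE \<omega> in M. real_cond_exp M F (\<lambda>_. c) \<omega> = c"
    by (intro F.real_cond_exp_F_meas) auto
  moreover have "AE \<omega> in M. real_cond_exp M F (\<lambda>\<omega>. d * f \<omega>) \<omega> = d * real_cond_exp M F f \<omega>"
    using assms(2) by (rule F.real_cond_exp_cmult)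
  ultimately show ?thesis by eventually_elim simp
qed

lemma (in prob_space) real_cond_exp_eq_coarser_if_measurable:
  assumes G: "subalgebra M G" and F: "subalgebra G F" and f: "integrable M f"
    and w: "w \<in> borel_measurable F" and eq: "AE \<omega> in M. real_cond_exp M G f \<omega> = w \<omega>"
  shows "AE \<omega> in M. real_cond_exp M G f \<omega> = real_cond_exp M F f \<omega>"
proof -
  interpret G: sigma_finite_subalgebra M G
    using G by (rule sigma_finite_subalgebra_if_subalgebra)
  interpret F: sigma_finite_subalgebra M F
    using subalgebra_trans[OF G F] by (rule sigma_finite_subalgebra_if_subalgebra)
  have w_M: "w \<in> borel_measurable M"
    using F.subalg w by (rule measurable_from_subalg)
  have w_int: "integrable M w"
    using G.real_cond_exp_int(1)[OF f] w_M eq by (rule integrable_cong_AE_imp)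
  have "AE \<omega> in M. real_cond_exp M F f \<omega> = real_cond_exp M F (real_cond_exp M G f) \<omega>"
    using G F f by (rule F.real_cond_exp_nested_subalg[THEN AE_symmetric])
  moreover have "AE \<omega> in M. real_cond_exp M F (real_cond_exp M G f) \<omega> = real_cond_exp M F w \<omega>"
    using eq by (rule F.real_cond_exp_cong) (use w_M in auto)
  moreover have "AE \<omega> in M. real_cond_exp M F w \<omega> = w \<omega>"
    using w_int w by (rule F.real_cond_exp_F_meas)
  ultimately show ?thesis
    using eq by eventually_elim simp
qed

lemma (in prob_space) cond_indep_set_integral_indicator:
  assumes "X \<in> measurable M MX" "V \<in> measurable M MV" "W \<in> measurable M MW"
    and "cond_indep M MX X MV V MW W" "A \<in> sets MX" "B \<in> sets MV"
  shows "(\<integral>\<omega>\<in>X -` A \<inter> space M. indicator (V -` B \<inter> space M) \<omega> \<partial>M)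
       = (\<integral>\<omega>\<in>X -` A \<inter> space M.
            real_cond_exp M (vimage_algebra (space M) W MW) (indicator (V -` B \<inter> space M)) \<omega> \<partial>M)"
proof -
  let ?F = "vimage_algebra (space M) W MW"
  let ?iA = "indicator (X -` A \<inter> space M) :: 'a \<Rightarrow> real"
  let ?iB = "indicator (V -` B \<inter> space M) :: 'a \<Rightarrow> real"
  interpret F: sigma_finite_subalgebra M ?F
    using assms(3) by (intro sigma_finite_subalgebra_if_subalgebra subalgebra_vimage_algebra)
  have A: "X -` A \<inter> space M \<in> events" and B: "V -` B \<inter> space M \<in> events"
    using assms measurable_sets by blast+
  have iAB: "integrable M (\<lambda>\<omega>. ?iA \<omega> * ?iB \<omega>)"
    unfolding indicator_inter_arith[symmetric] using sets.Int[OF A B] by (rule integrable_indicator_event)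
  have "(\<integral>\<omega>\<in>X -` A \<inter> space M. ?iB \<omega> \<partial>M) = (\<integral>\<omega>. ?iA \<omega> * ?iB \<omega> \<partial>M)"
    by (simp add: set_lebesgue_integral_def)
  also have "\<dots> = (\<integral>\<omega>. real_cond_exp M ?F (\<lambda>\<omega>. ?iA \<omega> * ?iB \<omega>) \<omega> \<partial>M)"
    using iAB by (rule F.real_cond_exp_int(2)[symmetric])
  also have "\<dots> = (\<integral>\<omega>. real_cond_exp M ?F ?iA \<omega> * real_cond_exp M ?F ?iB \<omega> \<partial>M)"
    using assms(4-6) unfolding cond_indep_def by (intro integral_cong_AE) auto
  also have "\<dots> = (\<integral>\<omega>. real_cond_exp M ?F ?iB \<omega> * ?iA \<omega> \<partial>M)"
    unfolding mult.commute[of "real_cond_exp M ?F ?iA _"]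
    using A B by (intro F.real_cond_exp_intg(2) integrable_real_mult_indicator F.real_cond_exp_int(1)) auto
  also have "\<dots> = (\<integral>\<omega>\<in>X -` A \<inter> space M. real_cond_exp M ?F ?iB \<omega> \<partial>M)"
    by (simp add: set_lebesgue_integral_def mult.commute)
  finally show ?thesis .
qed

lemma (in prob_space) real_cond_exp_indicator_cond_indep:
  assumes "X \<in> measurable M MX" "V \<in> measurable M MV" "W \<in> measurable M MW"
    and "cond_indep M MX X MV V MW W" "B \<in> sets MV"
  shows "AE \<omega> in M. real_cond_exp M (vimage_algebra (space M) X MX) (indicator (V -` B \<inter> space M)) \<omega>
       = real_cond_exp M (vimage_algebra (space M) X MX)
           (real_cond_exp M (vimage_algebra (space M) W MW) (indicator (V -` B \<inter> space M))) \<omega>"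
proof -
  let ?X = "vimage_algebra (space M) X MX" and ?W = "vimage_algebra (space M) W MW"
  let ?iB = "indicator (V -` B \<inter> space M) :: 'a \<Rightarrow> real"
  interpret X: sigma_finite_subalgebra M ?X
    using assms(1) by (intro sigma_finite_subalgebra_if_subalgebra subalgebra_vimage_algebra)
  interpret W: sigma_finite_subalgebra M ?W
    using assms(3) by (intro sigma_finite_subalgebra_if_subalgebra subalgebra_vimage_algebra)
  have iB: "integrable M ?iB"
    using assms(2,5) measurable_sets by blast
  show ?thesis
  proof (rule X.real_cond_exp_charact)
    fix C assume "C \<in> sets ?X"
    then obtain A where A: "A \<in> sets MX" "C = X -` A \<inter> space M"
      using measurable_space[OF assms(1)] by (auto simp: sets_vimage_algebra2)
    have "(\<integral>\<omega>\<in>C. ?iB \<omega> \<partial>M) = (\<integral>\<omega>\<in>C. real_cond_exp M ?W ?iB \<omega> \<partial>M)"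
      unfolding A(2) using assms(1-4) A(1) assms(5) by (rule cond_indep_set_integral_indicator)
    also have "\<dots> = (\<integral>\<omega>\<in>C. real_cond_exp M ?X (real_cond_exp M ?W ?iB) \<omega> \<partial>M)"
      using iB \<open>C \<in> sets ?X\<close> by (intro X.real_cond_exp_intA W.real_cond_exp_int(1))
    finally show "(\<integral>\<omega>\<in>C. ?iB \<omega> \<partial>M) = (\<integral>\<omega>\<in>C. real_cond_exp M ?X (real_cond_exp M ?W ?iB) \<omega> \<partial>M)" .
  qed (use iB in \<open>auto intro: X.real_cond_exp_int(1) W.real_cond_exp_int(1)\<close>)
qed

lemma (in prob_space) real_cond_exp_indicator_eq_if_cond_indep_comp:
  assumes Z: "Z \<in> measurable M MZ" and g: "g \<in> measurable MZ MG" and V: "V \<in> measurable M MV"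
    and indep: "cond_indep M MZ Z MV V MG (g \<circ> Z)" and B: "B \<in> sets MV"
  shows "AE \<omega> in M.
      real_cond_exp M (vimage_algebra (space M) Z MZ) (indicator (V -` B \<inter> space M)) \<omega>
    = real_cond_exp M (vimage_algebra (space M) (g \<circ> Z) MG) (indicator (V -` B \<inter> space M)) \<omega>"
    (is "AE \<omega> in M. real_cond_exp M ?Z ?iB \<omega> = real_cond_exp M ?G ?iB \<omega>")
proof -
  have gZ: "g \<circ> Z \<in> measurable M MG"
    using Z g by (rule measurable_comp)
  interpret Z: sigma_finite_subalgebra M ?Z
    using Z by (intro sigma_finite_subalgebra_if_subalgebra subalgebra_vimage_algebra)
  interpret G: sigma_finite_subalgebra M ?G
    using gZ by (intro sigma_finite_subalgebra_if_subalgebra subalgebra_vimage_algebra)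
  have "AE \<omega> in M. real_cond_exp M ?Z ?iB \<omega> = real_cond_exp M ?Z (real_cond_exp M ?G ?iB) \<omega>"
    using Z V gZ indep B by (rule real_cond_exp_indicator_cond_indep)
  moreover have "AE \<omega> in M. real_cond_exp M ?Z (real_cond_exp M ?G ?iB) \<omega> = real_cond_exp M ?G ?iB \<omega>"
    using measurable_sets[OF V B] by (intro Z.real_cond_exp_F_meas G.real_cond_exp_int(1)
        measurable_from_subalg[OF subalgebra_vimage_algebra_comp[OF Z g]] borel_measurable_cond_exp) auto
  ultimately show ?thesis
    by eventually_elim simp
qed

lemma (in prob_space) cond_indep_comp_if_real_cond_exp_indicator_eq:
  assumes Z: "Z \<in> measurable M MZ" and g: "g \<in> measurable MZ MG" and V: "V \<in> measurable M MV"
    and eq: "\<And>B. B \<in> sets MV \<Longrightarrow> AE \<omega> in M.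
      real_cond_exp M (vimage_algebra (space M) Z MZ) (indicator (V -` B \<inter> space M)) \<omega>
    = real_cond_exp M (vimage_algebra (space M) (g \<circ> Z) MG) (indicator (V -` B \<inter> space M)) \<omega>"
  shows "cond_indep M MZ Z MV V MG (g \<circ> Z)"
  unfolding cond_indep_def
proof (intro ballI)
  fix A B assume A: "A \<in> sets MZ" and B: "B \<in> sets MV"
  let ?Z = "vimage_algebra (space M) Z MZ" and ?G = "vimage_algebra (space M) (g \<circ> Z) MG"
  let ?iA = "indicator (Z -` A \<inter> space M) :: 'a \<Rightarrow> real"
  let ?iB = "indicator (V -` B \<inter> space M) :: 'a \<Rightarrow> real"
  let ?w = "real_cond_exp M ?G ?iB"
  have subZ: "subalgebra M ?Z" and subG: "subalgebra ?Z ?G"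
    using subalgebra_vimage_algebra[OF Z] subalgebra_vimage_algebra_comp[OF Z g] .
  interpret Z: sigma_finite_subalgebra M ?Z
    using subZ by (rule sigma_finite_subalgebra_if_subalgebra)
  interpret G: sigma_finite_subalgebra M ?G
    using subalgebra_trans[OF subZ subG] by (rule sigma_finite_subalgebra_if_subalgebra)
  have A_event: "Z -` A \<inter> space M \<in> events" and B_event: "V -` B \<inter> space M \<in> events"
    using measurable_sets[OF Z A] measurable_sets[OF V B] .
  have iAB: "integrable M (\<lambda>\<omega>. ?iA \<omega> * ?iB \<omega>)"
    unfolding indicator_inter_arith[symmetric]
    using sets.Int[OF A_event B_event] by (rule integrable_indicator_event)
  have "AE \<omega> in M. real_cond_exp M ?Z (\<lambda>\<omega>. ?iA \<omega> * ?iB \<omega>) \<omega> = ?iA \<omega> * real_cond_exp M ?Z ?iB \<omega>"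
    using A B_event iAB by (intro Z.real_cond_exp_mult borel_measurable_indicator in_vimage_algebra) auto
  with eq[OF B] have "AE \<omega> in M. real_cond_exp M ?Z (\<lambda>\<omega>. ?iA \<omega> * ?iB \<omega>) \<omega> = ?w \<omega> * ?iA \<omega>"
    by eventually_elim simp
  then have "AE \<omega> in M. real_cond_exp M ?G (real_cond_exp M ?Z (\<lambda>\<omega>. ?iA \<omega> * ?iB \<omega>)) \<omega>
      = real_cond_exp M ?G (\<lambda>\<omega>. ?w \<omega> * ?iA \<omega>) \<omega>"
    by (rule G.real_cond_exp_cong) (use A_event in auto)
  moreover have "AE \<omega> in M. real_cond_exp M ?G (real_cond_exp M ?Z (\<lambda>\<omega>. ?iA \<omega> * ?iB \<omega>)) \<omega>
      = real_cond_exp M ?G (\<lambda>\<omega>. ?iA \<omega> * ?iB \<omega>) \<omega>"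
    using subZ subG iAB by (rule G.real_cond_exp_nested_subalg)
  moreover have "AE \<omega> in M. real_cond_exp M ?G (\<lambda>\<omega>. ?w \<omega> * ?iA \<omega>) \<omega> = ?w \<omega> * real_cond_exp M ?G ?iA \<omega>"
    using A_event B_event
    by (intro G.real_cond_exp_mult integrable_real_mult_indicator G.real_cond_exp_int(1)) auto
  ultimately show "AE \<omega> in M. real_cond_exp M ?G (\<lambda>\<omega>. ?iA \<omega> * ?iB \<omega>) \<omega>
      = real_cond_exp M ?G ?iA \<omega> * ?w \<omega>"
    by eventually_elim simp
qed

lemma indicator_vimage_binary:
  fixes Y :: "'a \<Rightarrow> real"
  assumes "\<omega> \<in> \<Omega>" "Y \<omega> \<in> {0, 1}"
  shows "indicator (Y -` D \<inter> \<Omega>) \<omega>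
    = indicator D 0 + (indicator D 1 - indicator D 0) * (indicator {\<omega> \<in> \<Omega>. Y \<omega> = 1} \<omega> :: real)"
  using assms by (auto simp: indicator_def)

lemma set_integral_vimage_binary:
  fixes f Y :: "'a \<Rightarrow> real"
  assumes "Y \<in> borel_measurable M" "\<forall>\<omega>\<in>space M. Y \<omega> \<in> {0, 1}" "integrable M f"
  shows "(\<integral>\<omega>\<in>Y -` D \<inter> space M. f \<omega> \<partial>M)
    = indicator D 0 * (\<integral>\<omega>\<in>{\<omega> \<in> space M. Y \<omega> = 0}. f \<omega> \<partial>M)
      + indicator D 1 * (\<integral>\<omega>\<in>{\<omega> \<in> space M. Y \<omega> = 1}. f \<omega> \<partial>M)"
proof -
  have [measurable]: "{\<omega> \<in> space M. Y \<omega> = y} \<in> sets M" for y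
    using assms(1) by measurable
  have "(\<integral>\<omega>\<in>Y -` D \<inter> space M. f \<omega> \<partial>M)
      = (\<integral>\<omega>. indicator D 0 * (indicator {\<omega> \<in> space M. Y \<omega> = 0} \<omega> * f \<omega>)
           + indicator D 1 * (indicator {\<omega> \<in> space M. Y \<omega> = 1} \<omega> * f \<omega>) \<partial>M)"
    unfolding set_lebesgue_integral_def
    using assms(2) by (intro Bochner_Integration.integral_cong) (auto simp: indicator_def)
  also have "\<dots> = indicator D 0 * (\<integral>\<omega>\<in>{\<omega> \<in> space M. Y \<omega> = 0}. f \<omega> \<partial>M)
      + indicator D 1 * (\<integral>\<omega>\<in>{\<omega> \<in> space M. Y \<omega> = 1}. f \<omega> \<partial>M)"
    unfolding set_lebesgue_integral_def using assms(3)
    by (simp add: integrable_mult_indicator[where 'b=real, simplified])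
  finally show ?thesis .
qed

lemma (in prob_space) real_cond_exp_indicator_vimage_binary:
  fixes Y :: "'a \<Rightarrow> real"
  assumes "sigma_finite_subalgebra M F" "Y \<in> borel_measurable M" "\<forall>\<omega>\<in>space M. Y \<omega> \<in> {0, 1}"
    and "D \<in> sets borel"
  shows "AE \<omega> in M. real_cond_exp M F (indicator (Y -` D \<inter> space M)) \<omega>
    = indicator D 0 + (indicator D 1 - indicator D 0) * real_cond_exp M F (indicator {\<omega> \<in> space M. Y \<omega> = 1}) \<omega>"
proof -
  interpret F: sigma_finite_subalgebra M F by fact
  have [measurable]: "Y \<in> borel_measurable M" "D \<in> sets borel" "{\<omega> \<in> space M. Y \<omega> = 1} \<in> events"
    using assms(2,4) by measurable
  have "AE \<omega> in M. real_cond_exp M F (indicator (Y -` D \<inter> space M)) \<omega>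
      = real_cond_exp M F (\<lambda>\<omega>. indicator D 0 + (indicator D 1 - indicator D 0)
          * indicator {\<omega> \<in> space M. Y \<omega> = 1} \<omega>) \<omega>"
    using assms(3) by (intro F.real_cond_exp_cong AE_I2 indicator_vimage_binary) auto
  moreover have "AE \<omega> in M. real_cond_exp M F (\<lambda>\<omega>. indicator D 0 + (indicator D 1 - indicator D 0)
          * indicator {\<omega> \<in> space M. Y \<omega> = 1} \<omega>) \<omega>
      = indicator D 0 + (indicator D 1 - indicator D 0) * real_cond_exp M F (indicator {\<omega> \<in> space M. Y \<omega> = 1}) \<omega>"
    using assms(1) by (rule real_cond_exp_affine) simp
  ultimately show ?thesis by eventually_elim simp
qed

lemma (in prob_space) real_cond_exp_indicator_given_binary_eq_cond_prob:
  fixes Y :: "'a \<Rightarrow> real"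
  assumes Y: "Y \<in> borel_measurable M" "\<forall>\<omega>\<in>space M. Y \<omega> \<in> {0, 1}"
    and P: "{\<omega> \<in> space M. P \<omega>} \<in> events"
  shows "AE \<omega> in M. real_cond_exp M (vimage_algebra (space M) Y borel) (indicator {\<omega> \<in> space M. P \<omega>}) \<omega>
    = \<P>(\<omega> in M. P \<omega> \<bar> Y \<omega> = 0)
      + (\<P>(\<omega> in M. P \<omega> \<bar> Y \<omega> = 1) - \<P>(\<omega> in M. P \<omega> \<bar> Y \<omega> = 0)) * indicator {\<omega> \<in> space M. Y \<omega> = 1} \<omega>"
    (is "AE \<omega> in M. real_cond_exp M ?Y ?iP \<omega> = ?h \<omega>")
proof -
  interpret Y: sigma_finite_subalgebra M ?Y
    using Y(1) by (intro sigma_finite_subalgebra_if_subalgebra subalgebra_vimage_algebra)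
  have fiber_event: "{\<omega> \<in> space M. Y \<omega> = y} \<in> events" for y
    using Y(1) by measurable
  have fiber: "(\<integral>\<omega>\<in>{\<omega> \<in> space M. Y \<omega> = y}. ?iP \<omega> \<partial>M) = (\<integral>\<omega>\<in>{\<omega> \<in> space M. Y \<omega> = y}. ?h \<omega> \<partial>M)"
    if "y \<in> {0, 1}" for y
  proof -
    have "(\<integral>\<omega>\<in>{\<omega> \<in> space M. Y \<omega> = y}. ?iP \<omega> \<partial>M) = \<P>(\<omega> in M. P \<omega> \<and> Y \<omega> = y)"
      by (rule set_integral_indicator_Collect)
    also have "\<dots> = \<P>(\<omega> in M. P \<omega> \<bar> Y \<omega> = y) * \<P>(\<omega> in M. Y \<omega> = y)"
      using P fiber_event by (rule prob_conj_eq_cond_prob_mult)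
    also have "\<dots> = (\<integral>\<omega>\<in>{\<omega> \<in> space M. Y \<omega> = y}. \<P>(\<omega> in M. P \<omega> \<bar> Y \<omega> = y) \<partial>M)"
      using fiber_event by (simp add: set_integral_const)
    also have "\<dots> = (\<integral>\<omega>\<in>{\<omega> \<in> space M. Y \<omega> = y}. ?h \<omega> \<partial>M)"
      using that fiber_event by (intro set_lebesgue_integral_cong) auto
    finally show ?thesis .
  qed
  show ?thesis
  proof (rule Y.real_cond_exp_charact)
    fix C assume "C \<in> sets ?Y"
    then obtain D where "C = Y -` D \<inter> space M"
      by (auto simp: sets_vimage_algebra2)
    then show "(\<integral>\<omega>\<in>C. ?iP \<omega> \<partial>M) = (\<integral>\<omega>\<in>C. ?h \<omega> \<partial>M)"
      using P fiber_event fiber by (simp add: set_integral_vimage_binary[OF Y])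
  next
    have "{\<omega> \<in> space M. Y \<omega> = 1} \<in> sets ?Y"
      using in_vimage_algebra[of "{1}" borel Y "space M"] by (simp add: vimage_def Int_def conj_commute)
    then show "?h \<in> borel_measurable ?Y"
      by measurable
  qed (use P fiber_event in auto)
qed

lemma (in prob_space) cond_indep_comp_binary_if_real_cond_exp_eq:
  fixes Y :: "'a \<Rightarrow> real"
  assumes Z: "Z \<in> measurable M MZ" and g: "g \<in> measurable MZ MG"
    and Y: "Y \<in> borel_measurable M" "\<forall>\<omega>\<in>space M. Y \<omega> \<in> {0, 1}"
    and eq: "AE \<omega> in M.
      real_cond_exp M (vimage_algebra (space M) Z MZ) (indicator {\<omega> \<in> space M. Y \<omega> = 1}) \<omega>
    = real_cond_exp M (vimage_algebra (space M) (g \<circ> Z) MG) (indicator {\<omega> \<in> space M. Y \<omega> = 1}) \<omega>"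
  shows "cond_indep M MZ Z borel Y MG (g \<circ> Z)"
proof (rule cond_indep_comp_if_real_cond_exp_indicator_eq[OF Z g Y(1)])
  fix D :: "real set" assume D: "D \<in> sets borel"
  let ?iD = "indicator (Y -` D \<inter> space M)" and ?iY = "indicator {\<omega> \<in> space M. Y \<omega> = 1}"
  have binary: "AE \<omega> in M. real_cond_exp M F ?iD \<omega>
      = indicator D 0 + (indicator D 1 - indicator D 0) * real_cond_exp M F ?iY \<omega>"
    if "subalgebra M F" for F
    using sigma_finite_subalgebra_if_subalgebra[OF that] Y D by (rule real_cond_exp_indicator_vimage_binary)
  show "AE \<omega> in M. real_cond_exp M (vimage_algebra (space M) Z MZ) ?iD \<omega>
      = real_cond_exp M (vimage_algebra (space M) (g \<circ> Z) MG) ?iD \<omega>"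
    using binary[OF subalgebra_vimage_algebra[OF Z]]
      binary[OF subalgebra_vimage_algebra[OF measurable_comp[OF Z g]]] eq
    by eventually_elim simp
qed

lemma (in prob_space) real_cond_exp_indicator_cond_indep_binary:
  fixes Y S :: "'a \<Rightarrow> real"
  assumes Z: "Z \<in> measurable M MZ" and S: "S \<in> borel_measurable M"
    and Y: "Y \<in> borel_measurable M" "\<forall>\<omega>\<in>space M. Y \<omega> \<in> {0, 1}"
    and indep: "cond_indep M MZ Z borel S borel Y" and B: "B \<in> sets borel"
  shows "AE \<omega> in M. real_cond_exp M (vimage_algebra (space M) Z MZ) (indicator (S -` B \<inter> space M)) \<omega>
    = \<P>(\<omega> in M. S \<omega> \<in> B \<bar> Y \<omega> = 0) + (\<P>(\<omega> in M. S \<omega> \<in> B \<bar> Y \<omega> = 1) - \<P>(\<omega> in M. S \<omega> \<in> B \<bar> Y \<omega> = 0))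
      * real_cond_exp M (vimage_algebra (space M) Z MZ) (indicator {\<omega> \<in> space M. Y \<omega> = 1}) \<omega>"
    (is "AE \<omega> in M. real_cond_exp M ?Z ?iS \<omega> = ?p0 + (?p1 - ?p0) * real_cond_exp M ?Z ?iY \<omega>")
proof -
  interpret Z: sigma_finite_subalgebra M ?Z
    using Z by (intro sigma_finite_subalgebra_if_subalgebra subalgebra_vimage_algebra)
  have S_event: "{\<omega> \<in> space M. S \<omega> \<in> B} \<in> events"
    using S B by measurable
  have "AE \<omega> in M. real_cond_exp M ?Z ?iS \<omega>
      = real_cond_exp M ?Z (real_cond_exp M (vimage_algebra (space M) Y borel) ?iS) \<omega>"
    using Z S Y(1) indep B by (rule real_cond_exp_indicator_cond_indep)
  moreover have "AE \<omega> in M. real_cond_exp M ?Z (real_cond_exp M (vimage_algebra (space M) Y borel) ?iS) \<omega>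
      = real_cond_exp M ?Z (\<lambda>\<omega>. ?p0 + (?p1 - ?p0) * ?iY \<omega>) \<omega>"
    using real_cond_exp_indicator_given_binary_eq_cond_prob[OF Y S_event] Y(1)
    by (intro Z.real_cond_exp_cong) (auto simp: vimage_def Int_def conj_commute)
  moreover have "AE \<omega> in M. real_cond_exp M ?Z (\<lambda>\<omega>. ?p0 + (?p1 - ?p0) * ?iY \<omega>) \<omega>
      = ?p0 + (?p1 - ?p0) * real_cond_exp M ?Z ?iY \<omega>"
    using Y(1) by (intro real_cond_exp_affine Z.sigma_finite_subalgebra_axioms integrable_indicator_event) measurable
  ultimately show ?thesis by eventually_elim simp
qed

theorem proposition2:
  fixes M :: "'a measure" and MZ :: "'z measure"
    and Y :: "'a \<Rightarrow> real" and Z :: "'a \<Rightarrow> 'z" and S :: "'a \<Rightarrow> real"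
  assumes "prob_space M"
    and "Y \<in> borel_measurable M" and "\<forall>\<omega>\<in>space M. Y \<omega> \<in> {0, 1}"
    and "Z \<in> measurable M MZ"
    and "S \<in> borel_measurable M"
    and "cond_indep M MZ Z borel S borel Y"
    and "\<exists>a::real. \<P>(\<omega> in M. S \<omega> \<le> a \<bar> Y \<omega> = 1) \<noteq> \<P>(\<omega> in M. S \<omega> \<le> a \<bar> Y \<omega> = 0)"
  shows "\<forall>(MG :: 'g measure) (g :: 'z \<Rightarrow> 'g). g \<in> measurable MZ MG \<longrightarrow>
           cond_indep M MZ Z borel S MG (g \<circ> Z) \<longrightarrow>
           cond_indep M MZ Z borel Y MG (g \<circ> Z)"
proof (intro allI impI)
  fix MG :: "'g measure" and g :: "'z \<Rightarrow> 'g"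
  assume g: "g \<in> measurable MZ MG" and S_indep: "cond_indep M MZ Z borel S MG (g \<circ> Z)"
  interpret prob_space M by fact
  let ?Z = "vimage_algebra (space M) Z MZ" and ?G = "vimage_algebra (space M) (g \<circ> Z) MG"
  obtain a where a: "\<P>(\<omega> in M. S \<omega> \<in> {..a} \<bar> Y \<omega> = 1) \<noteq> \<P>(\<omega> in M. S \<omega> \<in> {..a} \<bar> Y \<omega> = 0)"
    using assms(7) by auto
  let ?p0 = "\<P>(\<omega> in M. S \<omega> \<in> {..a} \<bar> Y \<omega> = 0)" and ?p1 = "\<P>(\<omega> in M. S \<omega> \<in> {..a} \<bar> Y \<omega> = 1)"
  let ?iS = "indicator (S -` {..a} \<inter> space M)" and ?iY = "indicator {\<omega> \<in> space M. Y \<omega> = 1}"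
  have "AE \<omega> in M. real_cond_exp M ?Z ?iS \<omega> = ?p0 + (?p1 - ?p0) * real_cond_exp M ?Z ?iY \<omega>"
    using assms(4,5,2,3,6) by (rule real_cond_exp_indicator_cond_indep_binary) simp
  moreover have "AE \<omega> in M. real_cond_exp M ?Z ?iS \<omega> = real_cond_exp M ?G ?iS \<omega>"
    using assms(4) g assms(5) S_indep by (rule real_cond_exp_indicator_eq_if_cond_indep_comp) simp
  ultimately have "AE \<omega> in M. real_cond_exp M ?Z ?iY \<omega> = (real_cond_exp M ?G ?iS \<omega> - ?p0) / (?p1 - ?p0)"
    by eventually_elim (use a in \<open>simp add: field_simps\<close>)
  then have "AE \<omega> in M. real_cond_exp M ?Z ?iY \<omega> = real_cond_exp M ?G ?iY \<omega>"
    using subalgebra_vimage_algebra[OF assms(4)] subalgebra_vimage_algebra_comp[OF assms(4) g] assms(2)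
    by (intro real_cond_exp_eq_coarser_if_measurable) auto
  then show "cond_indep M MZ Z borel Y MG (g \<circ> Z)"
    using assms(4) g assms(2,3) by (intro cond_indep_comp_binary_if_real_cond_exp_eq)
qed

end
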